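(* Let $G\in\mathbb{R}^{z_1\times\cdots\times z_n}$ and, for $k=1,\dots,n$, let $H_k\in\mathbb{R}^{m_{k,1}\times\cdots\times m_{k,d_k}}$ with $d_k\ge1$. Let $T=G\circledast[H_1,\dots,H_n]$, a tensor with dimensions indexed by pairs $(k,i)$, $1\le k\le n$, $1\le i\le d_k$, of sizes $s_{k,i}=z_k+m_{k,i}-1$. Then for every $k$ and $i$, $$\operatorname{rank}([k,i],T)\le\begin{cases}\min\big(s_{k,1},\operatorname{rank}(k,G)\big), & \text{if } H_k \text{ is one-dimensional } (d_k=1),\\ \min\big(s_{k,i},\,z_k\operatorname{rank}(i,H_k)\big), & \text{otherwise.}\end{cases}$$
   Context: Tensors are indexed from $0$ and regarded as functions on $\mathbb{Z}^d$ vanishing outside their index ranges. The outer convolution $T=G\circledast[H_1,\dots,H_n]$ is the tensor of order $\sum_k d_k$ with entries $T(t_{1,1},\dots,t_{1,d_1};\dots;t_{n,1},\dots,t_{n,d_n})=\sum_{\tau_1,\dots,\tau_n}G(\tau_1,\dots,\tau_n)\prod_{k=1}^n H_k(t_{k,1}-\tau_k,\,t_{k,2}-\tau_k,\dots,t_{k,d_k}-\tau_k)$, for $t_{k,i}\in\{0,\dots,z_k+m_{k,i}-2\}$. For a tensor $A$, $\operatorname{rank}(j,A)$ is the $j$-th Tucker rank, i.e. the rank of the mode-$j$ matricization of $A$ (for a matrix, its rank; a one-dimensional vector has rank $1$); $\operatorname{rank}([k,i],T)$ is the Tucker rank of $T$ along the dimension indexed by $(k,i)$. *)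

theory Defs
  imports Complex_Main "HOL-Library.Function_Algebras"
begin

text \<open>Tensors are real-valued functions on integer index lists (points of Z^d),
  vanishing outside their index box. Indices are 0-based.\<close>

definition tbox :: "nat list \<Rightarrow> int list set" where
  "tbox ds = {xs. length xs = length ds \<and> (\<forall>i<length ds. 0 \<le> xs ! i \<and> xs ! i < int (ds ! i))}"

definition is_tensor :: "nat list \<Rightarrow> (int list \<Rightarrow> real) \<Rightarrow> bool" where
  "is_tensor ds A \<longleftrightarrow> (\<forall>xs. xs \<notin> tbox ds \<longrightarrow> A xs = 0)"

definition frank :: "('a \<Rightarrow> real) set \<Rightarrow> nat" where
  "frank S = vector_space.dim (\<lambda>c (f::'a \<Rightarrow> real) x. c * f x) S"

text \<open>Tucker rank along mode j of a tensor with N = size of mode j: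
  rank of the mode-j matricization = dimension of the span of its rows,
  row a being the function of the remaining indices.\<close>
definition tucker_rank :: "nat \<Rightarrow> nat \<Rightarrow> (int list \<Rightarrow> real) \<Rightarrow> nat" where
  "tucker_rank j N A = frank ((\<lambda>a r. A (take j r @ a # drop j r)) ` {0..<int N})"

text \<open>Tensors with dimensions indexed by pairs (k,i): indices are lists of lists.\<close>
definition tbox2 :: "nat list list \<Rightarrow> int list list set" where
  "tbox2 ss = {tt. length tt = length ss \<and> (\<forall>k<length ss. tt ! k \<in> tbox (ss ! k))}"

definition tucker_rank2 :: "nat \<Rightarrow> nat \<Rightarrow> nat \<Rightarrow> (int list list \<Rightarrow> real) \<Rightarrow> nat" where
  "tucker_rank2 k i N T =
     frank ((\<lambda>a tt. T (tt[k := take i (tt ! k) @ a # drop i (tt ! k)])) ` {0..<int N})"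

definition oconv_dims :: "nat list \<Rightarrow> nat list list \<Rightarrow> nat list list" where
  "oconv_dims z m = map (\<lambda>k. map (\<lambda>mi. z ! k + mi - 1) (m ! k)) [0..<length z]"

definition outer_conv ::
  "nat list \<Rightarrow> nat list list \<Rightarrow> (int list \<Rightarrow> real) \<Rightarrow> (nat \<Rightarrow> int list \<Rightarrow> real)
     \<Rightarrow> int list list \<Rightarrow> real" where
  "outer_conv z m G H tt =
     (if tt \<in> tbox2 (oconv_dims z m) then
        (\<Sum>\<tau>\<in>tbox z. G \<tau> * (\<Prod>k<length z. H k (map (\<lambda>t. t - \<tau> ! k) (tt ! k))))
      else 0)"

end

theory Submission
  imports Defs
begin

(* Splitting the summation index \<tau> of the convolution into its k-th coordinate c and the
   remaining coordinates \<sigma>, every slice of T along mode (k,i) at position a becomes a sum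
   over c of products in which the only dependence on a is through the slice of H_k along
   mode i at position a - c.  Expanding these slices of H_k in a basis of their span writes
   every slice of T as a linear combination of z_k * rank(i,H_k) fixed functions, indexed by
   c and the basis element.  If d_k = 1, H_k only contributes the scalars H_k(a - c); then
   one expands instead the mode-k slices of G at position c, and every slice of T becomes a
   combination of rank(k,G) fixed functions.  The bound s_{k,i} is just the number of
   slices. *)

global_interpretation pointwise: vector_space "\<lambda>c (f::'a \<Rightarrow> real) x. c * f x"
  by unfold_locales (auto simp: fun_eq_iff algebra_simps)

lemma sum_fun_apply: "(sum f A) x = (\<Sum>a\<in>A. f a x)"
  by (induction A rule: infinite_finite_induct) auto

lemma lincomb_in_span:
  "(\<lambda>x. \<Sum>j\<in>J. v j * F j x) \<in> pointwise.span (F ` J)"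
proof -
  have "(\<lambda>x. \<Sum>j\<in>J. v j * F j x) = (\<Sum>j\<in>J. (\<lambda>x. v j * F j x))"
    by (simp add: sum_fun_apply fun_eq_iff)
  also have "\<dots> \<in> pointwise.span (F ` J)"
    by (intro pointwise.span_sum pointwise.span_scale pointwise.span_base) simp
  finally show ?thesis .
qed

lemma frank_le_card_of_lincomb:
  assumes "finite J" and "\<And>a x. a \<in> A \<Longrightarrow> R a x = (\<Sum>j\<in>J. v a j * F j x)"
  shows "frank (R ` A) \<le> card J"
proof -
  have "frank (R ` A) \<le> card (F ` J)"
    unfolding frank_def
  proof (rule pointwise.dim_le_card)
    have "R a = (\<lambda>x. \<Sum>j\<in>J. v a j * F j x)" if "a \<in> A" for a
      using assms(2)[OF that] by auto
    then show "R ` A \<subseteq> pointwise.span (F ` J)"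
      using lincomb_in_span by auto
  qed (use assms(1) in simp)
  also have "\<dots> \<le> card J"
    using assms(1) by (rule card_image_le)
  finally show ?thesis .
qed

lemma frank_image_le_card:
  assumes "finite A"
  shows "frank (f ` A) \<le> card A"
proof -
  have "frank (f ` A) \<le> card (f ` A)"
    unfolding frank_def using assms
    by (intro pointwise.dim_le_card) (auto intro: pointwise.span_base)
  also have "\<dots> \<le> card A"
    using assms by (rule card_image_le)
  finally show ?thesis .
qed

lemma frank_spanning_coeffs:
  assumes "finite A"
  obtains B u where "finite B" "card B = frank (R ` A)"
    and "\<And>a x. a \<in> A \<Longrightarrow> R a x = (\<Sum>\<beta>\<in>B. u a \<beta> * \<beta> x)"
proof -
  obtain B where B: "B \<subseteq> R ` A" "R ` A \<subseteq> pointwise.span B" "card B = frank (R ` A)"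
    unfolding frank_def by (metis pointwise.basis_exists)
  have "finite B"
    using B(1) assms finite_surj by blast
  then have "\<forall>a\<in>A. \<exists>u. R a = (\<lambda>x. \<Sum>\<beta>\<in>B. u \<beta> * \<beta> x)"
    using B(2) by (force simp: pointwise.span_finite sum_fun_apply fun_eq_iff)
  then obtain u
    where "\<And>a. a \<in> A \<Longrightarrow> R a = (\<lambda>x. \<Sum>\<beta>\<in>B. u a \<beta> * \<beta> x)"
    by metis
  with \<open>finite B\<close> B(3) show thesis
    by (metis that)
qed

definition insert_at :: "nat \<Rightarrow> 'a \<Rightarrow> 'a list \<Rightarrow> 'a list" where
  "insert_at i a xs = take i xs @ a # drop i xs"

lemma length_insert_at [simp]: "length (insert_at i a xs) = Suc (length xs)"
  by (simp add: insert_at_def)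

lemma nth_insert_at:
  "i \<le> length xs \<Longrightarrow> p \<le> length xs \<Longrightarrow>
    insert_at i a xs ! p = (if p < i then xs ! p else if p = i then a else xs ! (p - 1))"
  by (auto simp: insert_at_def nth_append min_def)

lemma map_insert_at: "map f (insert_at i a xs) = insert_at i (f a) (map f xs)"
  by (simp add: insert_at_def take_map drop_map)

lemma list_update_conv_insert_at:
  "k < length xs \<Longrightarrow> xs[k := c] = insert_at k c (take k xs @ drop (Suc k) xs)"
  by (simp add: insert_at_def upd_conv_take_nth_drop min_def)

lemma tucker_rank_insert_at:
  "tucker_rank j N A = frank ((\<lambda>a r. A (insert_at j a r)) ` {0..<int N})"
  by (simp add: tucker_rank_def insert_at_def)

lemma tucker_rank2_insert_at:
  "tucker_rank2 k i N T =
    frank ((\<lambda>a tt. T (tt[k := insert_at i a (tt ! k)])) ` {0..<int N})"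
  by (simp add: tucker_rank2_def insert_at_def)

lemma tucker_rank2_le: "tucker_rank2 k i N T \<le> N"
  unfolding tucker_rank2_def using frank_image_le_card[of "{0..<int N}"] by simp

lemma insert_at_in_tbox_iff:
  assumes "i < length ds" "0 \<le> a" "a < int (ds ! i)"
  shows "insert_at i a xs \<in> tbox ds \<longleftrightarrow> insert_at i 0 xs \<in> tbox ds"
  using assms by (cases "length ds = Suc (length xs)") (auto simp: tbox_def nth_insert_at)

lemma tensor_insert_at_eq_0:
  assumes "is_tensor ds A" "i < length ds" "\<not> (0 \<le> a \<and> a < int (ds ! i))"
  shows "A (insert_at i a xs) = 0"
proof -
  have "insert_at i a xs \<notin> tbox ds"
    using assms(2,3) by (auto simp: tbox_def nth_insert_at)
  then show ?thesis
    using assms(1) by (simp add: is_tensor_def)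
qed

lemma sum_tbox_split:
  assumes "k < length z"
  shows "(\<Sum>\<tau>\<in>tbox z. f \<tau>) =
    (\<Sum>c\<in>{0..<int (z ! k)}. \<Sum>\<sigma>\<in>{\<sigma>\<in>tbox z. \<sigma> ! k = 0}. f (\<sigma>[k := c]))"
proof -
  have "(\<Sum>\<tau>\<in>tbox z. f \<tau>) =
      (\<Sum>(c, \<sigma>)\<in>{0..<int (z ! k)} \<times> {\<sigma>\<in>tbox z. \<sigma> ! k = 0}. f (\<sigma>[k := c]))"
  proof (rule sum.reindex_bij_witness[where j = "\<lambda>\<tau>. (\<tau> ! k, \<tau>[k := 0])"
        and i = "\<lambda>(c, \<sigma>). \<sigma>[k := c]"])
    fix \<tau> assume "\<tau> \<in> tbox z"
    then show "(\<tau> ! k, \<tau>[k := 0]) \<in> {0..<int (z ! k)} \<times> {\<sigma>\<in>tbox z. \<sigma> ! k = 0}"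
      using assms by (auto simp: tbox_def nth_list_update)
  qed (use assms in \<open>auto simp: tbox_def nth_list_update list_update_same_conv\<close>)
  also have "\<dots> = (\<Sum>c\<in>{0..<int (z ! k)}. \<Sum>\<sigma>\<in>{\<sigma>\<in>tbox z. \<sigma> ! k = 0}. f (\<sigma>[k := c]))"
    by (rule sum.cartesian_product[symmetric])
  finally show ?thesis .
qed

lemma length_oconv_dims [simp]: "length (oconv_dims z m) = length z"
  by (simp add: oconv_dims_def)

lemma nth_oconv_dims:
  "k < length z \<Longrightarrow> oconv_dims z m ! k = map (\<lambda>mi. z ! k + mi - 1) (m ! k)"
  by (simp add: oconv_dims_def)

lemma insert_at_in_tbox2_iff:
  assumes "k < length ss" "i < length (ss ! k)" "0 \<le> a" "a < int (ss ! k ! i)"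
  shows "tt[k := insert_at i a (tt ! k)] \<in> tbox2 ss \<longleftrightarrow>
    tt[k := insert_at i 0 (tt ! k)] \<in> tbox2 ss"
  using assms insert_at_in_tbox_iff[OF assms(2-4), of "tt ! k"]
  by (auto simp: tbox2_def nth_list_update) metis+

definition conv_cofactor ::
  "nat list \<Rightarrow> (nat \<Rightarrow> int list \<Rightarrow> real) \<Rightarrow> nat \<Rightarrow> int list \<Rightarrow> int list list
     \<Rightarrow> real" where
  "conv_cofactor z H k \<sigma> tt =
     (\<Prod>j\<in>{..<length z} - {k}. H j (map (\<lambda>t. t - \<sigma> ! j) (tt ! j)))"

lemma conv_cofactor_list_update [simp]:
  "conv_cofactor z H k (\<sigma>[k := c]) tt = conv_cofactor z H k \<sigma> tt"
  unfolding conv_cofactor_def by (rule prod.cong) auto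

lemma outer_conv_slice:
  assumes "length m = length z" "k < length z" "i < length (m ! k)"
    and "0 \<le> a" "a < int (z ! k + m ! k ! i - 1)"
  shows "outer_conv z m G H (tt[k := insert_at i a (tt ! k)]) =
    (if tt[k := insert_at i 0 (tt ! k)] \<in> tbox2 (oconv_dims z m) then
      \<Sum>c\<in>{0..<int (z ! k)}. \<Sum>\<sigma>\<in>{\<sigma>\<in>tbox z. \<sigma> ! k = 0}.
        G (\<sigma>[k := c]) * conv_cofactor z H k \<sigma> tt *
        H k (insert_at i (a - c) (map (\<lambda>t. t - c) (tt ! k)))
     else 0)"
proof -
  let ?tt = "tt[k := insert_at i a (tt ! k)]"
  have box_iff: "?tt \<in> tbox2 (oconv_dims z m) \<longleftrightarrow>
      tt[k := insert_at i 0 (tt ! k)] \<in> tbox2 (oconv_dims z m)"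
    using assms by (intro insert_at_in_tbox2_iff) (simp_all add: nth_oconv_dims)
  show ?thesis
  proof (cases "?tt \<in> tbox2 (oconv_dims z m)")
    case True
    then have "k < length tt"
      using assms(2) by (simp add: tbox2_def)
    have factor: "(\<Prod>j<length z. H j (map (\<lambda>t. t - \<tau> ! j) (?tt ! j)))
        = H k (insert_at i (a - \<tau> ! k) (map (\<lambda>t. t - \<tau> ! k) (tt ! k))) *
          conv_cofactor z H k \<tau> tt" for \<tau>
    proof -
      have "(\<Prod>j<length z. H j (map (\<lambda>t. t - \<tau> ! j) (?tt ! j)))
          = H k (map (\<lambda>t. t - \<tau> ! k) (?tt ! k)) *
            (\<Prod>j\<in>{..<length z} - {k}. H j (map (\<lambda>t. t - \<tau> ! j) (?tt ! j)))"
        using assms(2) by (simp add: prod.remove)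
      also have "(\<Prod>j\<in>{..<length z} - {k}. H j (map (\<lambda>t. t - \<tau> ! j) (?tt ! j)))
          = conv_cofactor z H k \<tau> tt"
        unfolding conv_cofactor_def by (rule prod.cong) auto
      finally show ?thesis
        using \<open>k < length tt\<close> by (simp add: map_insert_at)
    qed
    have "outer_conv z m G H ?tt = (\<Sum>\<tau>\<in>tbox z. G \<tau> *
        (H k (insert_at i (a - \<tau> ! k) (map (\<lambda>t. t - \<tau> ! k) (tt ! k))) * conv_cofactor z H k \<tau> tt))"
      using True by (simp add: outer_conv_def factor)
    also have "\<dots> = (\<Sum>c\<in>{0..<int (z ! k)}. \<Sum>\<sigma>\<in>{\<sigma>\<in>tbox z. \<sigma> ! k = 0}.
        G (\<sigma>[k := c]) * conv_cofactor z H k \<sigma> tt *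
        H k (insert_at i (a - c) (map (\<lambda>t. t - c) (tt ! k))))"
      using assms(2) by (subst sum_tbox_split) (auto intro!: sum.cong simp: tbox_def)
    finally show ?thesis
      using True box_iff by simp
  qed (use box_iff in \<open>simp add: outer_conv_def\<close>)
qed

lemma tucker_rank2_outer_conv_le_kernel:
  assumes "length m = length z" "k < length z" "i < length (m ! k)" "is_tensor (m ! k) (H k)"
  shows "tucker_rank2 k i (z ! k + m ! k ! i - 1) (outer_conv z m G H)
           \<le> z ! k * tucker_rank i (m ! k ! i) (H k)"
proof -
  obtain B u where "finite B" and card_B: "card B = tucker_rank i (m ! k ! i) (H k)"
    and u: "\<And>b r. b \<in> {0..<int (m ! k ! i)} \<Longrightarrow>
      H k (insert_at i b r) = (\<Sum>\<beta>\<in>B. u b \<beta> * \<beta> r)"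
    using frank_spanning_coeffs[of "{0..<int (m ! k ! i)}" "\<lambda>b r. H k (insert_at i b r)"]
    unfolding tucker_rank_insert_at by blast
  \<comment> \<open>H_k vanishes outside its box, so its slices at out-of-range positions a - c expand
      with zero coefficients.\<close>
  define w where "w b \<beta> = (if b \<in> {0..<int (m ! k ! i)} then u b \<beta> else 0)" for b \<beta>
  have H_expand: "H k (insert_at i b r) = (\<Sum>\<beta>\<in>B. w b \<beta> * \<beta> r)" for b r
    using u[of b r] tensor_insert_at_eq_0[OF assms(4,3)]
    by (cases "b \<in> {0..<int (m ! k ! i)}") (auto simp: w_def)
  define F where "F c \<beta> tt = (if tt[k := insert_at i 0 (tt ! k)] \<in> tbox2 (oconv_dims z m)
    then \<Sum>\<sigma>\<in>{\<sigma>\<in>tbox z. \<sigma> ! k = 0}.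
      G (\<sigma>[k := c]) * conv_cofactor z H k \<sigma> tt * \<beta> (map (\<lambda>t. t - c) (tt ! k))
    else 0)" for c \<beta> tt
  have "frank ((\<lambda>a tt. outer_conv z m G H (tt[k := insert_at i a (tt ! k)])) `
      {0..<int (z ! k + m ! k ! i - 1)})
      \<le> card ({0..<int (z ! k)} \<times> B)"
  proof (rule frank_le_card_of_lincomb)
    fix a tt assume "a \<in> {0..<int (z ! k + m ! k ! i - 1)}"
    then have "outer_conv z m G H (tt[k := insert_at i a (tt ! k)])
        = (\<Sum>c\<in>{0..<int (z ! k)}. \<Sum>\<beta>\<in>B. w (a - c) \<beta> * F c \<beta> tt)"
      using assms
      by (simp add: outer_conv_slice H_expand F_def sum_distrib_left sum_distrib_right mult_ac
          sum.swap[of _ B])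
    also have "\<dots> = (\<Sum>(c, \<beta>)\<in>{0..<int (z ! k)} \<times> B. w (a - c) \<beta> * F c \<beta> tt)"
      by (rule sum.cartesian_product)
    finally show "outer_conv z m G H (tt[k := insert_at i a (tt ! k)])
        = (\<Sum>j\<in>{0..<int (z ! k)} \<times> B.
             (case j of (c, \<beta>) \<Rightarrow> w (a - c) \<beta>) * case_prod F j tt)"
      by (simp add: case_prod_unfold)
  qed (use \<open>finite B\<close> in simp)
  then show ?thesis
    by (simp add: tucker_rank2_insert_at card_cartesian_product card_B)
qed

lemma tucker_rank2_outer_conv_le_core:
  assumes "length m = length z" "k < length z" "length (m ! k) = 1"
  shows "tucker_rank2 k 0 (z ! k + m ! k ! 0 - 1) (outer_conv z m G H)
           \<le> tucker_rank k (z ! k) G"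
proof -
  obtain B u where "finite B" and card_B: "card B = tucker_rank k (z ! k) G"
    and u: "\<And>c r. c \<in> {0..<int (z ! k)} \<Longrightarrow>
      G (insert_at k c r) = (\<Sum>\<beta>\<in>B. u c \<beta> * \<beta> r)"
    using frank_spanning_coeffs[of "{0..<int (z ! k)}" "\<lambda>c r. G (insert_at k c r)"]
    unfolding tucker_rank_insert_at by blast
  have G_expand:
    "G (\<sigma>[k := c]) = (\<Sum>\<beta>\<in>B. u c \<beta> * \<beta> (take k \<sigma> @ drop (Suc k) \<sigma>))"
    if "\<sigma> \<in> tbox z" "c \<in> {0..<int (z ! k)}" for \<sigma> c
    using that assms(2) u by (simp add: tbox_def list_update_conv_insert_at)
  have slice_empty: "tt ! k = []"
    if "tt[k := insert_at 0 0 (tt ! k)] \<in> tbox2 (oconv_dims z m)" for tt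
    using that assms(2,3) by (auto simp: tbox2_def tbox_def nth_oconv_dims)
  define F where "F \<beta> tt = (if tt[k := insert_at 0 0 (tt ! k)] \<in> tbox2 (oconv_dims z m)
    then \<Sum>\<sigma>\<in>{\<sigma>\<in>tbox z. \<sigma> ! k = 0}.
      \<beta> (take k \<sigma> @ drop (Suc k) \<sigma>) * conv_cofactor z H k \<sigma> tt
    else 0)" for \<beta> tt
  have "frank ((\<lambda>a tt. outer_conv z m G H (tt[k := insert_at 0 a (tt ! k)])) `
      {0..<int (z ! k + m ! k ! 0 - 1)})
      \<le> card B"
  proof (rule frank_le_card_of_lincomb)
    fix a tt assume a: "a \<in> {0..<int (z ! k + m ! k ! 0 - 1)}"
    show "outer_conv z m G H (tt[k := insert_at 0 a (tt ! k)])
        = (\<Sum>\<beta>\<in>B. (\<Sum>c\<in>{0..<int (z ! k)}. u c \<beta> * H k [a - c]) * F \<beta> tt)"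
    proof (cases "tt[k := insert_at 0 0 (tt ! k)] \<in> tbox2 (oconv_dims z m)")
      case True
      have "outer_conv z m G H (tt[k := insert_at 0 a (tt ! k)])
          = (\<Sum>c\<in>{0..<int (z ! k)}. \<Sum>\<sigma>\<in>{\<sigma>\<in>tbox z. \<sigma> ! k = 0}.
              G (\<sigma>[k := c]) * conv_cofactor z H k \<sigma> tt * H k [a - c])"
        using outer_conv_slice[of m z k 0 a G H tt] assms a True slice_empty[OF True]
        by (simp add: insert_at_def)
      also have "\<dots> = (\<Sum>c\<in>{0..<int (z ! k)}. \<Sum>\<sigma>\<in>{\<sigma>\<in>tbox z. \<sigma> ! k = 0}.
          (\<Sum>\<beta>\<in>B. u c \<beta> * \<beta> (take k \<sigma> @ drop (Suc k) \<sigma>)) *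
          conv_cofactor z H k \<sigma> tt * H k [a - c])"
        by (intro sum.cong refl) (simp add: G_expand)
      also have "\<dots> = (\<Sum>c\<in>{0..<int (z ! k)}. \<Sum>\<beta>\<in>B. u c \<beta> * H k [a - c] *
          (\<Sum>\<sigma>\<in>{\<sigma>\<in>tbox z. \<sigma> ! k = 0}.
             \<beta> (take k \<sigma> @ drop (Suc k) \<sigma>) * conv_cofactor z H k \<sigma> tt))"
        by (simp add: sum_distrib_left sum_distrib_right mult_ac
            sum.swap[of _ "{\<sigma>\<in>tbox z. \<sigma> ! k = 0}"])
      also have "\<dots> = (\<Sum>\<beta>\<in>B. (\<Sum>c\<in>{0..<int (z ! k)}. u c \<beta> * H k [a - c]) * F \<beta> tt)"
        using True by (subst sum.swap) (simp add: F_def sum_distrib_right)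
      finally show ?thesis .
    qed (use assms a in \<open>simp add: outer_conv_slice F_def\<close>)
  qed (fact \<open>finite B\<close>)
  then show ?thesis
    by (simp add: tucker_rank2_insert_at card_B)
qed

theorem theorem31:
  fixes z :: "nat list" and m :: "nat list list"
    and G :: "int list \<Rightarrow> real" and H :: "nat \<Rightarrow> int list \<Rightarrow> real"
  assumes "length m = length z"
    and "\<forall>zk\<in>set z. 0 < zk"
    and "\<forall>k<length z. m ! k \<noteq> [] \<and> (\<forall>mi\<in>set (m ! k). 0 < mi)"
    and "is_tensor z G"
    and "\<forall>k<length z. is_tensor (m ! k) (H k)"
  shows "\<forall>k<length z. \<forall>i<length (m ! k).
           tucker_rank2 k i (z ! k + m ! k ! i - 1) (outer_conv z m G H)
             \<le> (if length (m ! k) = 1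
                 then min (z ! k + m ! k ! 0 - 1) (tucker_rank k (z ! k) G)
                 else min (z ! k + m ! k ! i - 1) (z ! k * tucker_rank i (m ! k ! i) (H k)))"
proof (intro allI impI)
  fix k i assume k: "k < length z" and i: "i < length (m ! k)"
  let ?r = "tucker_rank2 k i (z ! k + m ! k ! i - 1) (outer_conv z m G H)"
  have "?r \<le> z ! k + m ! k ! i - 1"
    by (rule tucker_rank2_le)
  moreover have "?r \<le> tucker_rank k (z ! k) G" if "length (m ! k) = 1"
    using tucker_rank2_outer_conv_le_core[OF assms(1) k that] i that by simp
  moreover have "?r \<le> z ! k * tucker_rank i (m ! k ! i) (H k)"
    using tucker_rank2_outer_conv_le_kernel[OF assms(1) k i] assms(5) k by simp
  ultimately show "?r \<le> (if length (m ! k) = 1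
                 then min (z ! k + m ! k ! 0 - 1) (tucker_rank k (z ! k) G)
                 else min (z ! k + m ! k ! i - 1) (z ! k * tucker_rank i (m ! k ! i) (H k)))"
    using i by (auto simp: less_Suc_eq)
qed

end
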